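(* Let $N\geq 2$, $1\leq k<N$ be integers and assume $0<p<\frac 2k$. Then for any uniformly continuous, nonnegative and nontrivial $u_0:\mathbb R^N\to\mathbb R$, the solution of $$\partial_t u=\mathcal P_k^+ u+u^{1+p}\ \text{ in }(0,+\infty)\times\mathbb R^N,\qquad u(0,\cdot)=u_0,$$ blows up in finite time.
   Context: For $u:\mathbb R^N\to\mathbb R$, let $\lambda_1(D^2u)\leq\cdots\leq\lambda_N(D^2u)$ be the eigenvalues of the Hessian $D^2u$ and $\mathcal P_k^+ u:=\sum_{i=N-k+1}^N\lambda_i(D^2u)$. For uniformly continuous initial data the Cauchy problem is locally well-posed in time in the viscosity sense (with a comparison principle); "blows up in finite time" means the viscosity solution does not exist globally in time (it cannot be continued for all $t>0$). *)

theory Defs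
  imports "HOL-Analysis.Analysis"
begin

definition sorted_eigs :: "real^'n^'n \<Rightarrow> (nat \<Rightarrow> real) \<Rightarrow> bool" where
  "sorted_eigs X lam \<longleftrightarrow>
     (\<forall>i j. i \<le> j \<longrightarrow> j < CARD('n) \<longrightarrow> lam i \<le> lam j) \<and>
     (\<forall>i\<ge>CARD('n). lam i = 0) \<and>
     (\<forall>t. det (t *\<^sub>R mat 1 - X) = (\<Prod>i<CARD('n). t - lam i))"

text \<open>Pucci-type operator: sum of the k largest eigenvalues,
  lambda_{N-k+1} + ... + lambda_N in the paper's 1-based indexing.\<close>
definition Pplus :: "nat \<Rightarrow> real^'n^'n \<Rightarrow> real" where
  "Pplus k X = (THE s. \<exists>lam. sorted_eigs X lam \<and>
                   s = (\<Sum>i\<in>{CARD('n) - k..<CARD('n)}. lam i))"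

definition C12_test ::
  "(real \<Rightarrow> real^'n \<Rightarrow> real) \<Rightarrow> (real \<Rightarrow> real^'n \<Rightarrow> real) \<Rightarrow>
   (real \<Rightarrow> real^'n \<Rightarrow> real^'n) \<Rightarrow> (real \<Rightarrow> real^'n \<Rightarrow> real^'n^'n) \<Rightarrow> bool" where
  "C12_test phi phit Dphi H \<longleftrightarrow>
     (\<forall>t>0. \<forall>x.
        ((\<lambda>s. phi s x) has_real_derivative phit t x) (at t) \<and>
        ((phi t) has_derivative (\<lambda>h. Dphi t x \<bullet> h)) (at x) \<and>
        ((Dphi t) has_derivative (\<lambda>h. H t x *v h)) (at x)) \<and>
     continuous_on ({0<..} \<times> UNIV) (\<lambda>(t,x). phit t x) \<and>
     continuous_on ({0<..} \<times> UNIV) (\<lambda>(t,x). Dphi t x) \<and>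
     continuous_on ({0<..} \<times> UNIV) (\<lambda>(t,x). H t x)"

definition visc_sub :: "nat \<Rightarrow> real \<Rightarrow> (real \<Rightarrow> real^'n \<Rightarrow> real) \<Rightarrow> bool" where
  "visc_sub k p u \<longleftrightarrow>
     (\<forall>phi phit Dphi H t0 x0.
        C12_test phi phit Dphi H \<and> t0 > 0 \<and>
        (\<exists>e>0. \<forall>t x. dist (t, x) (t0, x0) < e \<longrightarrow> u t x - phi t x \<le> u t0 x0 - phi t0 x0)
        \<longrightarrow> phit t0 x0 \<le> Pplus k (H t0 x0) + u t0 x0 powr (1 + p))"

definition visc_super :: "nat \<Rightarrow> real \<Rightarrow> (real \<Rightarrow> real^'n \<Rightarrow> real) \<Rightarrow> bool" where
  "visc_super k p u \<longleftrightarrow>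
     (\<forall>phi phit Dphi H t0 x0.
        C12_test phi phit Dphi H \<and> t0 > 0 \<and>
        (\<exists>e>0. \<forall>t x. dist (t, x) (t0, x0) < e \<longrightarrow> u t x - phi t x \<ge> u t0 x0 - phi t0 x0)
        \<longrightarrow> phit t0 x0 \<ge> Pplus k (H t0 x0) + u t0 x0 powr (1 + p))"

text \<open>A global-in-time (nonnegative) viscosity solution of the Cauchy problem, in the
  well-posedness class: continuous on [0,\<infinity>) x R^N and uniformly continuous on each
  strip [0,T] x R^N.\<close>
definition global_solution ::
  "nat \<Rightarrow> real \<Rightarrow> (real^'n \<Rightarrow> real) \<Rightarrow> (real \<Rightarrow> real^'n \<Rightarrow> real) \<Rightarrow> bool" where
  "global_solution k p u0 u \<longleftrightarrow>
     continuous_on ({0..} \<times> UNIV) (\<lambda>(t,x). u t x) \<and>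
     (\<forall>T>0. uniformly_continuous_on ({0..T} \<times> UNIV) (\<lambda>(t,x). u t x)) \<and>
     (\<forall>t\<ge>0. \<forall>x. u t x \<ge> 0) \<and>
     (\<forall>x. u 0 x = u0 x) \<and>
     visc_sub k p u \<and> visc_super k p u"

end

theory Submission
  imports Defs "HOL-Computational_Algebra.Polynomial" "HOL-Real_Asymp.Real_Asymp"
begin

text \<open>
  A global solution is compared with an explicit subsolution that concentrates at a finite time.
  Choose k coordinates S and a point c with u0(c) > 0, and write x_S, x_S' for the components of
  x - c in and off S. The barrier
    W(t,x) = a(t) (E(t,x) - b - C1 t - g |x_S'|^2),   E(t,x) = (t0+t)^(-k/2) exp(-|x_S|^2/(4(t0+t))),
    a(t) = A ((T-t)^2 + eps^2)^(-q/2),   q = 1 + 1/p,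
  has Hessian alpha P_S + gamma P_S' + beta x_S x_S^T with gamma <= alpha once g is large, so
  P_k^+ D^2 W = a(t) dE/dt: on W the operator acts like the k-dimensional heat operator. The remaining
  term (a'/a) W is absorbed by W^(1+p) through Young's inequality, because |a'/a|^q <= q^q a/A < C1 a.
  Hence every shift W - beta a(t) is a strict classical subsolution, and touching from below gives
  W <= u up to a time beyond T. Since p < 2/k, the parameters t0, T, b, C1 can be chosen so that
  W(0,.) < u0, while W(T,c) = A eps^(-q) ((t0+T)^(-k/2) - b - C1 T) exceeds u(T,c) once eps is small.
\<close>

section \<open>Coordinate projections and the spectrum of a rank-one perturbation\<close>

definition coord_proj :: "'n::finite set \<Rightarrow> real^'n \<Rightarrow> real^'n" where
  "coord_proj S h = (\<chi> i. if i \<in> S then h$i else 0)"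

lemma coord_proj_add: "coord_proj S (x + y) = coord_proj S x + coord_proj S y"
  by (simp add: coord_proj_def vec_eq_iff)

lemma coord_proj_diff: "coord_proj S (x - y) = coord_proj S x - coord_proj S y"
  by (simp add: coord_proj_def vec_eq_iff)

lemma coord_proj_scaleR: "coord_proj S (c *\<^sub>R x) = c *\<^sub>R coord_proj S x"
  by (simp add: coord_proj_def vec_eq_iff)

lemma coord_proj_Compl: "coord_proj (-S) x = x - coord_proj S x"
  by (simp add: coord_proj_def vec_eq_iff)

lemma coord_proj_zero [simp]: "coord_proj S 0 = 0"
  by (simp add: coord_proj_def vec_eq_iff)

lemma coord_proj_idem [simp]: "coord_proj S (coord_proj S x) = coord_proj S x"
  by (simp add: coord_proj_def vec_eq_iff)

lemma inner_coord_proj: "coord_proj S x \<bullet> y = x \<bullet> coord_proj S y"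
  unfolding coord_proj_def inner_vec_def by (rule sum.cong) auto

lemma linear_coord_proj: "linear (coord_proj S)"
  by (rule linearI) (simp_all add: coord_proj_add coord_proj_scaleR)

lemma has_derivative_coord_proj [derivative_intros]:
  "(f has_derivative f') F \<Longrightarrow> ((\<lambda>x. coord_proj S (f x)) has_derivative (\<lambda>h. coord_proj S (f' h))) F"
  using linear_coord_proj bounded_linear.has_derivative linear_conv_bounded_linear by blast

lemma continuous_on_coord_proj [continuous_intros]:
  "continuous_on X f \<Longrightarrow> continuous_on X (\<lambda>x. coord_proj S (f x))"
  using linear_continuous_on[of "coord_proj S"] linear_coord_proj linear_conv_bounded_linear
    continuous_on_compose2 by blast

lemma has_derivative_coord_proj_sq:
  "((\<lambda>x. coord_proj S (x - c) \<bullet> coord_proj S (x - c)) has_derivative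
     (\<lambda>h. (2 *\<^sub>R coord_proj S (x - c)) \<bullet> h)) (at x)"
proof -
  have "((\<lambda>x. coord_proj S (x - c) \<bullet> coord_proj S (x - c)) has_derivative
     (\<lambda>h. coord_proj S (x - c) \<bullet> coord_proj S (h - 0) + coord_proj S (h - 0) \<bullet> coord_proj S (x - c))) (at x)"
    by (intro derivative_intros)
  then show ?thesis
    by (simp add: inner_coord_proj inner_commute)
qed

lemma householder_to_axis:
  fixes v :: "real^'n::finite"
  assumes "coord_proj S v = v" "j \<in> S"
  obtains Q :: "real^'n^'n" where "Q ** Q = mat 1" "\<And>x y. (Q *v x) \<bullet> y = x \<bullet> (Q *v y)"
    "\<And>h. Q *v coord_proj S h = coord_proj S (Q *v h)" "Q *v v = norm v *\<^sub>R axis j 1"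
proof (cases "v = norm v *\<^sub>R axis j 1")
  case True
  show ?thesis by (rule that[of "mat 1"]) (use True in auto)
next
  case False
  define e :: "real^'n" where "e = axis j 1"
  define w where "w = v - norm v *\<^sub>R e"
  define reflect where "reflect x = x - (2 * (w \<bullet> x) / (w \<bullet> w)) *\<^sub>R w" for x
  have ww: "w \<bullet> w > 0" using False by (simp add: w_def e_def)
  have "linear reflect" unfolding reflect_def[abs_def]
    by (rule linearI) (simp_all add: inner_add_right algebra_simps add_divide_distrib scaleR_add_left)
  then have Qx: "matrix reflect *v x = reflect x" for x
    by (simp add: matrix_works)
  have Pe: "coord_proj S e = e" using assms(2) by (simp add: coord_proj_def e_def vec_eq_iff axis_def)
  have Pw: "coord_proj S w = w" using assms(1) Pe by (simp add: w_def coord_proj_diff coord_proj_scaleR)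
  have w_refl: "w \<bullet> reflect x = - (w \<bullet> x)" for x
    using ww by (simp add: reflect_def inner_diff_right)
  show ?thesis
  proof (rule that[of "matrix reflect"])
    show "matrix reflect ** matrix reflect = mat 1"
      unfolding matrix_eq
      by (simp add: Qx matrix_vector_mul_assoc[symmetric] reflect_def[of "reflect _"] w_refl) (simp add: reflect_def)
    show "(matrix reflect *v x) \<bullet> y = x \<bullet> (matrix reflect *v y)" for x y
      by (simp add: Qx reflect_def inner_diff_left inner_diff_right inner_commute)
    show "matrix reflect *v coord_proj S h = coord_proj S (matrix reflect *v h)" for h
      using inner_coord_proj[of S w h] Pw
      by (simp add: Qx reflect_def coord_proj_diff coord_proj_scaleR)
    have ee: "e \<bullet> e = 1" by (simp add: e_def inner_axis_axis)
    have vv: "v \<bullet> v = norm v * norm v" by (simp add: dot_square_norm power2_eq_square)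
    have "w \<bullet> w = 2 * (w \<bullet> v)"
      unfolding w_def inner_diff_left inner_diff_right inner_scaleR_left inner_scaleR_right ee vv
      by (simp add: inner_commute algebra_simps)
    then show "matrix reflect *v v = norm v *\<^sub>R axis j 1"
      using ww by (simp add: Qx reflect_def w_def e_def)
  qed
qed

definition proj_rank1_matrix :: "'n::finite set \<Rightarrow> real \<Rightarrow> real \<Rightarrow> real \<Rightarrow> real^'n \<Rightarrow> real^'n^'n" where
  "proj_rank1_matrix S \<alpha> \<gamma> \<beta> v = (\<chi> i j. (if i = j then if i \<in> S then \<alpha> else \<gamma> else 0) + \<beta> * v$i * v$j)"

lemma proj_rank1_matrix_mult:
  "proj_rank1_matrix S \<alpha> \<gamma> \<beta> v *v h =
     \<alpha> *\<^sub>R coord_proj S h + \<gamma> *\<^sub>R coord_proj (-S) h + (\<beta> * (v \<bullet> h)) *\<^sub>R v"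
  unfolding vec_eq_iff
proof
  fix i
  have "(proj_rank1_matrix S \<alpha> \<gamma> \<beta> v *v h) $ i =
      (\<Sum>j\<in>UNIV. (if i = j then (if i \<in> S then \<alpha> else \<gamma>) * h$j else 0) + \<beta> * v$i * (v$j * h$j))"
    unfolding matrix_vector_mult_def proj_rank1_matrix_def vec_lambda_beta
    by (rule sum.cong) (auto simp: algebra_simps)
  also have "\<dots> = (if i \<in> S then \<alpha> else \<gamma>) * h$i + \<beta> * v$i * (v \<bullet> h)"
    by (simp add: sum.distrib sum_distrib_left[symmetric] inner_vec_def)
  finally show "(proj_rank1_matrix S \<alpha> \<gamma> \<beta> v *v h) $ i = (\<alpha> *\<^sub>R coord_proj S h +
      \<gamma> *\<^sub>R coord_proj (-S) h + (\<beta> * (v \<bullet> h)) *\<^sub>R v) $ i"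
    by (simp add: coord_proj_def)
qed

lemma continuous_on_proj_rank1_matrix [continuous_intros]:
  assumes "continuous_on X a" "continuous_on X b" "continuous_on X e" "continuous_on X f"
  shows "continuous_on X (\<lambda>x. proj_rank1_matrix S (a x) (b x) (e x) (f x))"
proof -
  have "continuous_on X (\<lambda>x. if i = j then if i \<in> S then a x else b x else 0)" for i j
    using assms by (cases "i = j"; cases "i \<in> S") auto
  then show ?thesis
    unfolding proj_rank1_matrix_def using assms by (intro continuous_intros) auto
qed

lemma proj_rank1_matrix_similar_axis:
  fixes v :: "real^'n::finite"
  assumes "coord_proj S v = v" "j \<in> S"
  obtains Q :: "real^'n^'n" where "Q ** Q = mat 1"
    "Q ** proj_rank1_matrix S \<alpha> \<gamma> \<beta> v ** Q = proj_rank1_matrix S \<alpha> \<gamma> (\<beta> * (v \<bullet> v)) (axis j 1)"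
proof -
  obtain Q :: "real^'n^'n" where QQ: "Q ** Q = mat 1" and Q_sym: "\<And>x y. (Q *v x) \<bullet> y = x \<bullet> (Q *v y)"
    and Q_proj: "\<And>h. Q *v coord_proj S h = coord_proj S (Q *v h)" and Qv: "Q *v v = norm v *\<^sub>R axis j 1"
    using householder_to_axis[OF assms] by blast
  have QQh: "Q *v (Q *v h) = h" for h
    by (simp add: matrix_vector_mul_assoc QQ)
  have "(Q ** proj_rank1_matrix S \<alpha> \<gamma> \<beta> v ** Q) *v h = proj_rank1_matrix S \<alpha> \<gamma> (\<beta> * (v \<bullet> v)) (axis j 1) *v h"
    for h
  proof -
    have Q_S: "Q *v coord_proj S (Q *v h) = coord_proj S h"
      using Q_proj QQh by metis
    have Q_N: "Q *v coord_proj (-S) (Q *v h) = coord_proj (-S) h"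
      by (simp add: coord_proj_Compl matrix_vector_mult_diff_distrib Q_S QQh)
    have v_Q: "v \<bullet> (Q *v h) = norm v * (axis j 1 \<bullet> h)"
      using Q_sym[of v h] by (simp add: Qv)
    have "norm v * norm v = v \<bullet> v" by (simp add: dot_square_norm power2_eq_square)
    then show ?thesis
      by (simp add: matrix_vector_mul_assoc[symmetric] proj_rank1_matrix_mult matrix_vector_right_distrib
          matrix_vector_mult_scaleR Q_S Q_N v_Q Qv mult_ac)
  qed
  then show ?thesis
    using QQ that by (simp add: matrix_eq)
qed

lemma det_char_proj_rank1_matrix_axis:
  assumes "j \<in> S"
  shows "det (t *\<^sub>R mat 1 - proj_rank1_matrix S \<alpha> \<gamma> \<beta> (axis j 1)) =
     (t - \<gamma>) ^ card (-S) * (t - \<alpha>) ^ (card S - 1) * (t - \<alpha> - \<beta>)"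
proof -
  define d where "d i = (if i \<notin> S then t - \<gamma> else if i = j then t - \<alpha> - \<beta> else t - \<alpha>)" for i
  have "det (t *\<^sub>R mat 1 - proj_rank1_matrix S \<alpha> \<gamma> \<beta> (axis j 1)) = (\<Prod>i\<in>UNIV. d i)"
    using assms by (subst det_diagonal) (auto simp: proj_rank1_matrix_def axis_def mat_def d_def intro!: prod.cong)
  also have "\<dots> = (\<Prod>i\<in>-S. d i) * (\<Prod>i\<in>S. d i)"
    by (subst prod.union_disjoint[symmetric]) (auto simp: Compl_partition2)
  also have "(\<Prod>i\<in>S. d i) = d j * (\<Prod>i\<in>S - {j}. d i)"
    using assms by (simp add: prod.remove)
  finally show ?thesis
    using assms by (simp add: d_def)
qed

lemma det_char_proj_rank1_matrix:
  fixes v :: "real^'n::finite"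
  assumes "coord_proj S v = v" "j \<in> S"
  shows "det (t *\<^sub>R mat 1 - proj_rank1_matrix S \<alpha> \<gamma> \<beta> v) =
     (t - \<gamma>) ^ card (-S) * (t - \<alpha>) ^ (card S - 1) * (t - \<alpha> - \<beta> * (v \<bullet> v))"
proof -
  define X where "X = proj_rank1_matrix S \<alpha> \<gamma> \<beta> v"
  define X' where "X' = proj_rank1_matrix S \<alpha> \<gamma> (\<beta> * (v \<bullet> v)) (axis j 1)"
  obtain Q where QQ: "Q ** Q = mat 1" and similar: "Q ** X ** Q = X'"
    using proj_rank1_matrix_similar_axis[OF assms] unfolding X_def X'_def by blast
  have QQh: "Q *v (Q *v h) = h" for h
    by (simp add: matrix_vector_mul_assoc QQ)
  have QXQh: "Q *v (X *v (Q *v h)) = X' *v h" for h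
    using similar by (simp add: matrix_vector_mul_assoc matrix_mul_assoc)
  have "(Q ** (t *\<^sub>R mat 1 - X) ** Q) *v h = (t *\<^sub>R mat 1 - X') *v h" for h
  proof -
    have "(Q ** (t *\<^sub>R mat 1 - X) ** Q) *v h = Q *v ((t *\<^sub>R mat 1 - X) *v (Q *v h))"
      by (simp only: matrix_vector_mul_assoc matrix_mul_assoc)
    also have "\<dots> = t *\<^sub>R h - X' *v h"
      by (simp add: matrix_vector_mult_diff_rdistrib matrix_vector_mult_diff_distrib
          scaleR_matrix_vector_assoc[symmetric] matrix_vector_mult_scaleR QQh QXQh)
    finally show ?thesis
      by (simp add: matrix_vector_mult_diff_rdistrib scaleR_matrix_vector_assoc[symmetric])
  qed
  then have "Q ** (t *\<^sub>R mat 1 - X) ** Q = t *\<^sub>R mat 1 - X'"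
    by (simp add: matrix_eq)
  then have "det (t *\<^sub>R mat 1 - X) = det (t *\<^sub>R mat 1 - X')"
    by (metis QQ det_I det_mul mult.commute mult.left_commute mult_1)
  then show ?thesis
    using det_char_proj_rank1_matrix_axis[OF assms(2)] by (simp add: X_def X'_def)
qed

lemma sorted_roots_unique:
  fixes l l' :: "nat \<Rightarrow> real"
  assumes "\<And>i j. i \<le> j \<Longrightarrow> j < n \<Longrightarrow> l i \<le> l j" "\<And>i j. i \<le> j \<Longrightarrow> j < n \<Longrightarrow> l' i \<le> l' j"
    and "(\<Prod>i<n. [:-l i, 1:]) = (\<Prod>i<n. [:-l' i, 1:])"
  shows "i < n \<Longrightarrow> l i = l' i"
  using assms
proof (induction n arbitrary: i)
  case 0
  then show ?case by simp
next
  case (Suc n)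
  have eq: "(\<Prod>i<n. [:-l i, 1:]) * [:-l n, 1:] = (\<Prod>i<n. [:-l' i, 1:]) * [:-l' n, 1:]"
    using Suc.prems(4) by simp
  have "\<exists>i<Suc n. l' i = l n"
    using arg_cong[OF eq, of "\<lambda>P. poly P (l n)"]
    by (simp add: poly_prod prod_zero_iff) (metis lessThan_iff less_Suc_eq)
  then have "l n \<le> l' n" using Suc.prems(3) by (metis less_Suc_eq_le order_refl)
  moreover have "\<exists>i<Suc n. l i = l' n"
    using arg_cong[OF eq, of "\<lambda>P. poly P (l' n)"]
    by (simp add: poly_prod prod_zero_iff) (metis lessThan_iff less_Suc_eq)
  then have "l' n \<le> l n" using Suc.prems(2) by (metis less_Suc_eq_le order_refl)
  ultimately have top: "l n = l' n" by simp
  with eq have "(\<Prod>i<n. [:-l i, 1:]) = (\<Prod>i<n. [:-l' i, 1:])"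
    by (metis mult_right_cancel pCons_eq_0_iff zero_neq_one)
  with Suc.prems(1-3) Suc.IH[of i] top show ?case
    by (cases "i = n") auto
qed

lemma Pplus_eq_sum_top_eigs:
  fixes X :: "real^'n^'n"
  assumes "sorted_eigs X lam"
  shows "Pplus k X = (\<Sum>i\<in>{CARD('n) - k..<CARD('n)}. lam i)"
  unfolding Pplus_def
proof (rule the_equality)
  fix s
  assume "\<exists>lam'. sorted_eigs X lam' \<and> s = (\<Sum>i\<in>{CARD('n) - k..<CARD('n)}. lam' i)"
  then obtain lam' where lam': "sorted_eigs X lam'" "s = (\<Sum>i\<in>{CARD('n) - k..<CARD('n)}. lam' i)"
    by blast
  have "poly (\<Prod>i<CARD('n). [:-lam i, 1:]) = poly (\<Prod>i<CARD('n). [:-lam' i, 1:])"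
    using assms lam'(1) by (simp add: sorted_eigs_def poly_prod fun_eq_iff)
  then have "i < CARD('n) \<Longrightarrow> lam i = lam' i" for i
    using assms lam'(1) by (intro sorted_roots_unique[of "CARD('n)"]) (auto simp: sorted_eigs_def poly_eq_poly_eq_iff)
  then show "s = (\<Sum>i\<in>{CARD('n) - k..<CARD('n)}. lam i)"
    using lam'(2) by (auto intro: sum.cong)
qed (use assms in blast)

lemma Pplus_proj_rank1_matrix:
  fixes v :: "real^'n::finite"
  assumes "card S = k" "1 \<le> k" "k < CARD('n)" "coord_proj S v = v" "\<gamma> \<le> \<alpha>" "0 \<le> \<beta>"
  shows "Pplus k (proj_rank1_matrix S \<alpha> \<gamma> \<beta> v) = k * \<alpha> + \<beta> * (v \<bullet> v)"
proof -
  define N where "N = CARD('n)"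
  define lam where "lam i = (if i < N - k then \<gamma> else if i < N - 1 then \<alpha>
      else if i = N - 1 then \<alpha> + \<beta> * (v \<bullet> v) else 0)" for i
  have kN: "1 \<le> k" "k < N" using assms by (auto simp: N_def)
  obtain j where j: "j \<in> S" using assms(1,2) by fastforce
  have top_idx: "\<not> N - 1 < N - k" using kN by arith
  then have top: "lam (N - 1) = \<alpha> + \<beta> * (v \<bullet> v)"
    by (simp add: lam_def)
  have N_split: "{..<N} = {0..<N - k} \<union> {N - k..<N - 1} \<union> {N - 1}" "{N - k..<N} = {N - k..<N - 1} \<union> {N - 1}"
    using kN by auto
  have "sorted_eigs (proj_rank1_matrix S \<alpha> \<gamma> \<beta> v) lam"
    unfolding sorted_eigs_def N_def[symmetric]
  proof (intro conjI allI impI)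
    show "lam i \<le> lam j" if "i \<le> j" "j < N" for i j
      using that assms(5) kN mult_nonneg_nonneg[OF assms(6) inner_ge_zero[of v]]
      by (auto simp: lam_def)
    show "lam i = 0" if "N \<le> i" for i
      using that kN by (auto simp: lam_def)
    have "card (-S) = N - k"
      using assms(1) card_Diff_subset[of S UNIV] by (simp add: N_def Compl_eq_Diff_UNIV)
    then show "det (t *\<^sub>R mat 1 - proj_rank1_matrix S \<alpha> \<gamma> \<beta> v) = (\<Prod>i<N. t - lam i)" for t
      unfolding det_char_proj_rank1_matrix[OF assms(4) j] N_split
      using kN assms(1) top_idx by (simp add: prod.union_disjoint lam_def)
  qed
  then have "Pplus k (proj_rank1_matrix S \<alpha> \<gamma> \<beta> v) = (\<Sum>i\<in>{N - k..<N}. lam i)"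
    unfolding N_def by (rule Pplus_eq_sum_top_eigs)
  also have "\<dots> = k * \<alpha> + \<beta> * (v \<bullet> v)"
    unfolding N_split using kN top_idx by (simp add: sum.union_disjoint lam_def of_nat_diff algebra_simps)
  finally show ?thesis .
qed

section \<open>Comparison with strict classical subsolutions\<close>

lemma mult_le_powr_add_powr:
  fixes K w p :: real
  assumes "0 \<le> w" "0 \<le> K" "0 < p"
  shows "K * w \<le> w powr (1 + p) + K powr (1 + 1/p)"
proof (cases "w \<le> K powr (1/p)")
  case True
  then have "K * w \<le> K * K powr (1/p)"
    using assms by (simp add: mult_left_mono)
  also have "\<dots> = K powr (1 + 1/p)"
    using assms by (cases "K = 0") (simp_all add: powr_add)
  finally show ?thesis using powr_ge_zero[of w "1 + p"] by linarith
next
  case False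
  have w_pos: "0 < w" using False powr_ge_zero[of K "1/p"] by linarith
  have "K = (K powr (1/p)) powr p"
    using assms by (simp add: powr_powr)
  also have "\<dots> < w powr p"
    using False assms by (intro powr_less_mono2) auto
  finally have "K * w \<le> w powr p * w"
    using w_pos by simp
  also have "\<dots> = w powr (1 + p)"
    using w_pos by (simp add: powr_add)
  finally show ?thesis using powr_ge_zero[of K "1 + 1/p"] by linarith
qed

lemma touching_point:
  fixes u W :: "real \<Rightarrow> real^'n \<Rightarrow> real" and a :: "real \<Rightarrow> real"
  assumes u_cont: "continuous_on ({0..} \<times> UNIV) (\<lambda>(t,x). u t x)"
    and u_nonneg: "\<And>t x. 0 \<le> t \<Longrightarrow> 0 \<le> u t x"
    and W_cont: "continuous_on ({0..T} \<times> UNIV) (\<lambda>(t,x). W t x)"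
    and a_cont: "continuous_on {0..T} a" and a_pos: "\<And>t. t \<in> {0..T} \<Longrightarrow> 0 < a t"
    and K: "compact K" "\<And>t x. t \<in> {0..T} \<Longrightarrow> x \<notin> K \<Longrightarrow> W t x \<le> 0"
    and initial: "\<And>x. W 0 x < u 0 x" and final: "\<And>x. W T x < u T x"
    and above: "t' \<in> {0..T}" "u t' x' < W t' x'"
  obtains b t0 x0 where "0 < b" "0 < t0" "t0 < T" "W t0 x0 - b * a t0 = u t0 x0"
    "\<And>t x. t \<in> {0..T} \<Longrightarrow> W t x - b * a t \<le> u t x"
proof -
  define m where "m = (\<lambda>(t,x). (W t x - u t x) / a t)"
  have x'K: "x' \<in> K"
    using K(2)[OF above(1)] u_nonneg[of t' x'] above by fastforce
  have "continuous_on ({0..T} \<times> K) m"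
  proof -
    have "continuous_on ({0..T} \<times> K) (\<lambda>(t,x). W t x)" "continuous_on ({0..T} \<times> K) (\<lambda>(t,x). u t x)"
      by (auto intro: continuous_on_subset[OF W_cont] continuous_on_subset[OF u_cont])
    moreover have "continuous_on ({0..T} \<times> K) (\<lambda>z. a (fst z))"
      by (rule continuous_on_compose2[OF a_cont continuous_on_fst]) auto
    ultimately show ?thesis
      unfolding m_def case_prod_beta' using a_pos by (intro continuous_intros) fastforce+
  qed
  moreover have "compact ({0..T} \<times> K)" using K(1) by (intro compact_Times) auto
  ultimately obtain z where z: "z \<in> {0..T} \<times> K" and z_max: "\<And>y. y \<in> {0..T} \<times> K \<Longrightarrow> m y \<le> m z"
    using continuous_attains_sup[of "{0..T} \<times> K" m] above(1) x'K by blast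
  obtain t0 x0 where z_eq: "z = (t0, x0)" by (cases z)
  define b where "b = m z"
  have "0 < m (t', x')" using above a_pos[OF above(1)] by (simp add: m_def)
  then have b_pos: "0 < b" using z_max[of "(t', x')"] above(1) x'K by (simp add: b_def)
  have t0: "t0 \<in> {0..T}" and a_t0: "0 < a t0" using z z_eq a_pos by auto
  have below: "W t x - b * a t \<le> u t x" if "t \<in> {0..T}" for t x
  proof (cases "x \<in> K")
    case True
    then show ?thesis
      using z_max[of "(t, x)"] that a_pos[OF that] by (simp add: m_def b_def pos_divide_le_eq)
  next
    case False
    have "0 < b * a t" using b_pos a_pos[OF that] by simp
    then show ?thesis
      using K(2)[OF that False] u_nonneg[of t x] that by simp
  qed
  have touch: "W t0 x0 - b * a t0 = u t0 x0"
    using a_t0 by (simp add: b_def z_eq m_def)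
  have "0 < b * a t0" using b_pos a_t0 by simp
  then have "t0 \<noteq> 0" "t0 \<noteq> T"
    using touch initial[of x0] final[of x0] by auto
  with t0 touch below b_pos show ?thesis by (intro that) auto
qed

lemma comparison_strict_subsolution:
  fixes u W :: "real \<Rightarrow> real^'n \<Rightarrow> real" and a :: "real \<Rightarrow> real"
  assumes super: "visc_super k p u"
    and u_cont: "continuous_on ({0..} \<times> UNIV) (\<lambda>(t,x). u t x)"
    and u_nonneg: "\<And>t x. 0 \<le> t \<Longrightarrow> 0 \<le> u t x"
    and W_cont: "continuous_on ({0..T} \<times> UNIV) (\<lambda>(t,x). W t x)"
    and a_cont: "continuous_on {0..T} a" and a_pos: "\<And>t. t \<in> {0..T} \<Longrightarrow> 0 < a t"
    and K: "compact K" "\<And>t x. t \<in> {0..T} \<Longrightarrow> x \<notin> K \<Longrightarrow> W t x \<le> 0"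
    and initial: "\<And>x. W 0 x < u 0 x" and final: "\<And>x. W T x < u T x"
    and strict: "\<And>b t0 x0. 0 \<le> b \<Longrightarrow> 0 < t0 \<Longrightarrow> t0 < T \<Longrightarrow> 0 \<le> W t0 x0 - b * a t0 \<Longrightarrow>
       \<exists>\<phi>t D\<phi> H. C12_test (\<lambda>t x. W t x - b * a t) \<phi>t D\<phi> H \<and>
          \<phi>t t0 x0 < Pplus k (H t0 x0) + (W t0 x0 - b * a t0) powr (1 + p)"
    and t: "t \<in> {0..T}"
  shows "W t x \<le> u t x"
proof (rule ccontr)
  assume "\<not> W t x \<le> u t x"
  then have "u t x < W t x" by simp
  obtain b t0 x0 where b: "0 < b" and t0: "0 < t0" "t0 < T"
    and touch: "W t0 x0 - b * a t0 = u t0 x0"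
    and below: "\<And>t x. t \<in> {0..T} \<Longrightarrow> W t x - b * a t \<le> u t x"
    by (rule touching_point[OF u_cont u_nonneg W_cont a_cont a_pos K initial final t \<open>u t x < W t x\<close>]) (auto intro: that)
  obtain \<phi>t D\<phi> H where test: "C12_test (\<lambda>t x. W t x - b * a t) \<phi>t D\<phi> H"
    and less: "\<phi>t t0 x0 < Pplus k (H t0 x0) + (W t0 x0 - b * a t0) powr (1 + p)"
    using strict[of b t0 x0] b t0 touch u_nonneg[of t0 x0] by auto
  have "\<forall>t x. dist (t, x) (t0, x0) < min t0 (T - t0) \<longrightarrow>
      u t x - (W t x - b * a t) \<ge> u t0 x0 - (W t0 x0 - b * a t0)"
  proof (intro allI impI)
    fix t x
    assume "dist (t, x) (t0, x0) < min t0 (T - t0)"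
    have "dist t t0 < min t0 (T - t0)"
      using \<open>dist (t, x) (t0, x0) < _\<close> dist_fst_le[of "(t, x)" "(t0, x0)"] by simp
    then have "t \<in> {0..T}" by (auto simp: dist_real_def)
    then show "u t x - (W t x - b * a t) \<ge> u t0 x0 - (W t0 x0 - b * a t0)"
      using below touch by simp
  qed
  moreover have "0 < min t0 (T - t0)" using t0 by simp
  ultimately have "Pplus k (H t0 x0) + u t0 x0 powr (1 + p) \<le> \<phi>t t0 x0"
    using super test t0(1) unfolding visc_super_def by blast
  then show False using less touch by simp
qed

section \<open>The barrier\<close>

text \<open>In the notation of the header, xS x and xN x are x_S and x_S', heat is E, amp is a and
  profile b t x is the bracket, so that barrier b = W. The shift b stays a variable because the
  comparison argument lowers the barrier by multiples of a(t), which amounts to raising b.\<close>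

context
  fixes S :: "'n::finite set" and c :: "real^'n" and t0 A T \<epsilon> q C1 g :: real
begin

definition xS :: "real^'n \<Rightarrow> real^'n" where "xS x = coord_proj S (x - c)"
definition xN :: "real^'n \<Rightarrow> real^'n" where "xN x = coord_proj (-S) (x - c)"
definition rho :: "real^'n \<Rightarrow> real" where "rho x = xS x \<bullet> xS x"
definition tau :: "real^'n \<Rightarrow> real" where "tau x = xN x \<bullet> xN x"

definition zeta :: "real \<Rightarrow> real" where "zeta t = (T - t)^2 + \<epsilon>^2"
definition amp :: "real \<Rightarrow> real" where "amp t = A * zeta t powr (-q/2)"
definition amp_dt :: "real \<Rightarrow> real" where "amp_dt t = A * q * (T - t) * zeta t powr (-q/2 - 1)"

definition heat :: "real \<Rightarrow> real^'n \<Rightarrow> real" where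
  "heat t x = (t0 + t) powr (- real (card S)/2) * exp (- rho x / (4*(t0+t)))"
definition heat_dt :: "real \<Rightarrow> real^'n \<Rightarrow> real" where
  "heat_dt t x = heat t x * (- real (card S)/(2*(t0+t)) + rho x/(4*(t0+t)^2))"

definition profile :: "real \<Rightarrow> real \<Rightarrow> real^'n \<Rightarrow> real" where
  "profile b t x = heat t x - b - C1 * t - g * tau x"
definition barrier :: "real \<Rightarrow> real \<Rightarrow> real^'n \<Rightarrow> real" where
  "barrier b t x = amp t * profile b t x"
definition barrier_dt :: "real \<Rightarrow> real \<Rightarrow> real^'n \<Rightarrow> real" where
  "barrier_dt b t x = amp_dt t * profile b t x + amp t * (heat_dt t x - C1)"
definition barrier_grad :: "real \<Rightarrow> real^'n \<Rightarrow> real^'n" where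
  "barrier_grad t x = amp t *\<^sub>R ((- heat t x/(2*(t0+t))) *\<^sub>R xS x - (2*g) *\<^sub>R xN x)"
definition barrier_hess :: "real \<Rightarrow> real^'n \<Rightarrow> real^'n^'n" where
  "barrier_hess t x = proj_rank1_matrix S (- amp t * heat t x/(2*(t0+t))) (-2*g*amp t)
     (amp t * heat t x/(4*(t0+t)^2)) (xS x)"

lemma rho_has_derivative: "(rho has_derivative (\<lambda>h. (2 *\<^sub>R xS x) \<bullet> h)) (at x)"
  unfolding rho_def[abs_def] xS_def by (rule has_derivative_coord_proj_sq)

lemma tau_has_derivative: "(tau has_derivative (\<lambda>h. (2 *\<^sub>R xN x) \<bullet> h)) (at x)"
  unfolding tau_def[abs_def] xN_def by (rule has_derivative_coord_proj_sq)

lemma heat_has_derivative_x: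
  assumes "0 < t0 + t"
  shows "(heat t has_derivative (\<lambda>h. (- heat t x/(2*(t0+t))) * (xS x \<bullet> h))) (at x)"
proof -
  define K where "K = (t0 + t) powr (- real (card S)/2)"
  define M where "M = - 1 / (4*(t0+t))"
  have "heat t = (\<lambda>x. K * exp (M * rho x))"
    by (simp add: heat_def fun_eq_iff K_def M_def)
  moreover have "((\<lambda>x. K * exp (M * rho x)) has_derivative
      (\<lambda>h. K * (exp (M * rho x) * (M * ((2 *\<^sub>R xS x) \<bullet> h))))) (at x)"
    by (auto intro!: derivative_eq_intros rho_has_derivative)
  moreover have "K * (exp (M * rho x) * (M * ((2 *\<^sub>R xS x) \<bullet> h))) = (- heat t x/(2*(t0+t))) * (xS x \<bullet> h)" for h
    using assms by (simp add: heat_def K_def M_def field_simps)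
  ultimately show ?thesis by simp
qed

lemma barrier_has_derivative_x:
  assumes "0 < t0 + t"
  shows "(barrier b t has_derivative (\<lambda>h. barrier_grad t x \<bullet> h)) (at x)"
proof -
  have "((\<lambda>x. amp t * (heat t x - b - C1 * t - g * tau x)) has_derivative
     (\<lambda>h. amp t * ((- heat t x/(2*(t0+t))) * (xS x \<bullet> h) - g * ((2 *\<^sub>R xN x) \<bullet> h)))) (at x)"
    by (auto intro!: derivative_eq_intros heat_has_derivative_x[OF assms] tau_has_derivative)
  moreover have "amp t * ((- heat t x/(2*(t0+t))) * (xS x \<bullet> h) - g * ((2 *\<^sub>R xN x) \<bullet> h))
      = barrier_grad t x \<bullet> h" for h
    by (simp add: barrier_grad_def inner_diff_left algebra_simps)
  ultimately show ?thesis
    unfolding barrier_def[abs_def] profile_def by simp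
qed

lemma xS_has_derivative: "(xS has_derivative coord_proj S) (at x)"
  using has_derivative_coord_proj[OF has_derivative_diff[OF has_derivative_ident has_derivative_const]]
  unfolding xS_def[abs_def] by simp

lemma xN_has_derivative: "(xN has_derivative coord_proj (-S)) (at x)"
  using has_derivative_coord_proj[OF has_derivative_diff[OF has_derivative_ident has_derivative_const]]
  unfolding xN_def[abs_def] by simp

lemma barrier_grad_has_derivative:
  assumes "0 < t0 + t"
  shows "(barrier_grad t has_derivative (\<lambda>h. barrier_hess t x *v h)) (at x)"
proof -
  have "((\<lambda>x. amp t *\<^sub>R ((- heat t x/(2*(t0+t))) *\<^sub>R xS x - (2*g) *\<^sub>R xN x)) has_derivative
     (\<lambda>h. amp t *\<^sub>R (((- ((- heat t x/(2*(t0+t))) * (xS x \<bullet> h))/(2*(t0+t))) *\<^sub>R xS x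
       + (- heat t x/(2*(t0+t))) *\<^sub>R coord_proj S h) - (2*g) *\<^sub>R coord_proj (-S) h))) (at x)"
    using assms
    by (auto intro!: derivative_eq_intros heat_has_derivative_x[OF assms] xS_has_derivative xN_has_derivative)
  moreover have "2 * t0 + 2 * t \<noteq> 0" "t0 + t \<noteq> 0" using assms by auto
  then have "amp t *\<^sub>R (((- ((- heat t x/(2*(t0+t))) * (xS x \<bullet> h))/(2*(t0+t))) *\<^sub>R xS x
       + (- heat t x/(2*(t0+t))) *\<^sub>R coord_proj S h) - (2*g) *\<^sub>R coord_proj (-S) h)
      = barrier_hess t x *v h" for h
    by (simp add: barrier_hess_def proj_rank1_matrix_mult algebra_simps power2_eq_square divide_simps)
  ultimately show ?thesis
    unfolding barrier_grad_def[abs_def] by simp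
qed

lemma zeta_pos: "0 < \<epsilon> \<Longrightarrow> 0 < zeta t"
  unfolding zeta_def by (simp add: add_nonneg_pos)

lemma amp_has_derivative:
  assumes "0 < \<epsilon>"
  shows "(amp has_real_derivative amp_dt t) (at t)"
proof -
  have "((\<lambda>s. A * ((T - s)^2 + \<epsilon>^2) powr (-q/2)) has_real_derivative
      A * ((-q/2) * ((T - t)^2 + \<epsilon>^2) powr (-q/2 - 1) * (2 * (T - t) * (0 - 1) + 0))) (at t)"
    using zeta_pos[OF assms, of t] by (auto intro!: derivative_eq_intros simp: zeta_def)
  moreover have "A * ((-q/2) * ((T - t)^2 + \<epsilon>^2) powr (-q/2 - 1) * (2 * (T - t) * (0 - 1) + 0)) = amp_dt t"
    by (simp add: amp_dt_def zeta_def field_simps)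
  ultimately show ?thesis
    unfolding amp_def[abs_def] zeta_def by simp
qed

lemma heat_has_derivative_t:
  assumes "0 < t0 + t"
  shows "((\<lambda>s. heat s x) has_real_derivative heat_dt t x) (at t)"
proof -
  define r where "r = - real (card S)/2"
  have "((\<lambda>s. (t0 + s) powr r * exp (- rho x / (4*(t0+s)))) has_real_derivative
     r * (t0 + t) powr (r - 1) * exp (- rho x / (4*(t0+t)))
       + (t0 + t) powr r * (exp (- rho x / (4*(t0+t))) * (rho x / (4*(t0+t)^2)))) (at t)"
    using assms
    by (auto intro!: derivative_eq_intros simp: power2_eq_square divide_simps) (simp add: algebra_simps)
  moreover have "r * (t0 + t) powr (r - 1) * exp (- rho x / (4*(t0+t)))
       + (t0 + t) powr r * (exp (- rho x / (4*(t0+t))) * (rho x / (4*(t0+t)^2))) = heat_dt t x"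
  proof -
    have "(t0 + t) powr (r - 1) = (t0 + t) powr r / (t0 + t)"
      using assms by (simp add: powr_diff)
    moreover have "- real (card S)/(2*(t0+t)) = r/(t0+t)" by (simp add: r_def)
    ultimately show ?thesis
      unfolding heat_dt_def heat_def r_def[symmetric] by (simp add: algebra_simps)
  qed
  ultimately show ?thesis
    unfolding heat_def r_def by simp
qed

lemma barrier_has_derivative_t:
  assumes "0 < t0 + t" "0 < \<epsilon>"
  shows "((\<lambda>s. barrier b s x) has_real_derivative barrier_dt b t x) (at t)"
proof -
  have "((\<lambda>s. amp s * (heat s x - b - C1 * s - g * tau x)) has_real_derivative
      amp_dt t * (heat t x - b - C1 * t - g * tau x) + amp t * (heat_dt t x - 0 - C1 * 1 - 0)) (at t)"
    by (auto intro!: derivative_eq_intros amp_has_derivative[OF assms(2)] heat_has_derivative_t[OF assms(1)])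
  then show ?thesis
    by (simp add: barrier_def profile_def barrier_dt_def)
qed

lemma continuous_on_xS [continuous_intros]: "continuous_on X f \<Longrightarrow> continuous_on X (\<lambda>z. xS (f z))"
  unfolding xS_def by (intro continuous_intros)

lemma continuous_on_xN [continuous_intros]: "continuous_on X f \<Longrightarrow> continuous_on X (\<lambda>z. xN (f z))"
  unfolding xN_def by (intro continuous_intros)

lemma continuous_on_rho [continuous_intros]: "continuous_on X f \<Longrightarrow> continuous_on X (\<lambda>z. rho (f z))"
  unfolding rho_def by (intro continuous_intros)

lemma continuous_on_tau [continuous_intros]: "continuous_on X f \<Longrightarrow> continuous_on X (\<lambda>z. tau (f z))"
  unfolding tau_def by (intro continuous_intros)

lemma continuous_on_amp [continuous_intros]:
  "0 < \<epsilon> \<Longrightarrow> continuous_on X f \<Longrightarrow> continuous_on X (\<lambda>z. amp (f z))"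
  unfolding amp_def using zeta_pos unfolding zeta_def by (intro continuous_intros) auto

lemma continuous_on_amp_dt [continuous_intros]:
  "0 < \<epsilon> \<Longrightarrow> continuous_on X f \<Longrightarrow> continuous_on X (\<lambda>z. amp_dt (f z))"
  unfolding amp_dt_def using zeta_pos unfolding zeta_def by (intro continuous_intros) auto

lemma continuous_on_heat [continuous_intros]:
  "continuous_on X f \<Longrightarrow> continuous_on X h \<Longrightarrow> \<forall>z\<in>X. 0 < t0 + f z \<Longrightarrow>
   continuous_on X (\<lambda>z. heat (f z) (h z))"
  unfolding heat_def by (intro continuous_intros) auto

lemma continuous_on_heat_dt [continuous_intros]:
  "continuous_on X f \<Longrightarrow> continuous_on X h \<Longrightarrow> \<forall>z\<in>X. 0 < t0 + f z \<Longrightarrow>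
   continuous_on X (\<lambda>z. heat_dt (f z) (h z))"
  unfolding heat_dt_def by (intro continuous_intros) auto

lemma continuous_on_barrier:
  "0 < \<epsilon> \<Longrightarrow> continuous_on ({t. 0 < t0 + t} \<times> UNIV) (\<lambda>(t,x). barrier b t x)"
  unfolding case_prod_beta' barrier_def profile_def by (intro continuous_intros) auto

lemma C12_test_barrier:
  assumes "0 \<le> t0" "0 < \<epsilon>"
  shows "C12_test (barrier b) (barrier_dt b) barrier_grad barrier_hess"
proof -
  have "0 < t0 + t" if "(t, x) \<in> {0<..} \<times> UNIV" for t and x :: "real^'n"
    using assms that by auto
  then have "continuous_on ({0<..} \<times> UNIV) (\<lambda>(t,x). barrier_dt b t x)"
    "continuous_on ({0<..} \<times> UNIV) (\<lambda>(t,x). barrier_grad t x)"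
    "continuous_on ({0<..} \<times> UNIV) (\<lambda>(t,x). barrier_hess t x)"
    unfolding case_prod_beta' barrier_dt_def profile_def barrier_grad_def barrier_hess_def
    using assms(2) by (intro continuous_intros; force)+
  then show ?thesis
    unfolding C12_test_def
    using barrier_has_derivative_t[OF _ assms(2)] barrier_has_derivative_x barrier_grad_has_derivative assms(1)
    by auto
qed

lemma amp_pos: "0 < A \<Longrightarrow> 0 < \<epsilon> \<Longrightarrow> 0 < amp t"
  unfolding amp_def using zeta_pos[of t] by simp

lemma heat_le:
  assumes "0 < t0" "0 \<le> t"
  shows "heat t x \<le> t0 powr (- real (card S)/2) * exp (- rho x / (4*(t0+t)))"
  unfolding heat_def using assms by (intro mult_right_mono powr_mono2') auto

lemma heat_le_initial_peak:
  assumes "0 < t0" "0 \<le> t"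
  shows "heat t x \<le> t0 powr (- real (card S)/2)"
proof -
  have "exp (- rho x / (4*(t0+t))) \<le> 1"
    using assms by (simp add: rho_def)
  then have "t0 powr (- real (card S)/2) * exp (- rho x / (4*(t0+t))) \<le> t0 powr (- real (card S)/2)"
    by (intro mult_left_le) simp_all
  with heat_le[OF assms, of x] show ?thesis by simp
qed

text \<open>Taking g large makes the eigenvalue -2 g a(t) of the directions off S the smallest one, so
  the operator sees exactly the Hessian of the k-dimensional heat kernel.\<close>
lemma Pplus_barrier_hess:
  assumes "card S = k" "1 \<le> k" "k < CARD('n)" "0 < t0" "0 \<le> t" "0 < \<epsilon>" "0 < A"
    and "t0 powr (- real k/2) / (4*t0) \<le> g"
  shows "Pplus k (barrier_hess t x) = amp t * heat_dt t x"
proof -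
  have a: "0 < amp t" using amp_pos assms by simp
  have "heat t x / (4*(t0+t)) \<le> t0 powr (- real k/2) / (4*t0)"
    using heat_le_initial_peak[OF assms(4,5), of x] assms(1,4,5)
    by (intro frac_le) (auto simp: heat_def)
  with assms(8) have "heat t x / (4*(t0+t)) \<le> g" by linarith
  then have "heat t x/(2*(t0+t)) \<le> 2 * g"
    using assms(4,5) by (simp add: field_simps)
  then have "amp t * (heat t x/(2*(t0+t))) \<le> amp t * (2 * g)"
    using a by (intro mult_left_mono) auto
  then have "-2*g*amp t \<le> - amp t * heat t x/(2*(t0+t))"
    by (simp add: algebra_simps)
  moreover have "0 \<le> amp t * heat t x/(4*(t0+t)^2)"
    using a by (simp add: heat_def)
  moreover have "coord_proj S (xS x) = xS x" by (simp add: xS_def)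
  ultimately have "Pplus k (barrier_hess t x) =
      k * (- amp t * heat t x/(2*(t0+t))) + amp t * heat t x/(4*(t0+t)^2) * (xS x \<bullet> xS x)"
    unfolding barrier_hess_def using assms(1-3) by (intro Pplus_proj_rank1_matrix) auto
  also have "\<dots> = amp t * heat_dt t x"
    using assms(1) by (simp add: heat_dt_def rho_def algebra_simps)
  finally show ?thesis .
qed

lemma amp_log_derivative_bound:
  assumes "0 < \<epsilon>" "0 < q" "0 < A"
  shows "\<bar>amp_dt t / amp t\<bar> powr q \<le> q powr q / A * amp t"
proof -
  have z: "0 < zeta t" using zeta_pos assms by simp
  have "zeta t powr (-q/2 - 1) = zeta t powr (-q/2) / zeta t"
    using z by (simp add: powr_diff)
  then have "amp_dt t / amp t = q * (T - t) / zeta t"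
    using z assms by (simp add: amp_dt_def amp_def)
  moreover have "\<bar>T - t\<bar> \<le> sqrt (zeta t)"
    unfolding zeta_def by (rule real_le_rsqrt) (simp add: power2_abs)
  ultimately have "\<bar>amp_dt t / amp t\<bar> \<le> q * sqrt (zeta t) / zeta t"
    using z assms by (simp add: abs_mult divide_right_mono mult_left_mono)
  also have "\<dots> = q * zeta t powr (-1/2)"
    using z powr_diff[of "zeta t" "1/2" 1] by (simp add: powr_half_sqrt)
  finally have "\<bar>amp_dt t / amp t\<bar> powr q \<le> (q * zeta t powr (-1/2)) powr q"
    using assms by (intro powr_mono2) auto
  also have "\<dots> = q powr q / A * amp t"
    using z assms by (simp add: powr_mult powr_powr amp_def)
  finally show ?thesis .
qed

lemma barrier_strict_subsolution:
  assumes "card S = k" "1 \<le> k" "k < CARD('n)" "0 < t0" "0 \<le> t" "0 < \<epsilon>" "0 < A"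
    and "t0 powr (- real k/2) / (4*t0) \<le> g" "0 < p" "q = 1 + 1/p" "q powr q < A * C1"
    and "0 \<le> barrier b t x"
  shows "barrier_dt b t x < Pplus k (barrier_hess t x) + barrier b t x powr (1 + p)"
proof -
  define \<kappa> where "\<kappa> = amp_dt t / amp t"
  have a: "0 < amp t" using amp_pos assms by simp
  have "barrier_dt b t x - Pplus k (barrier_hess t x) = \<kappa> * barrier b t x - amp t * C1"
    unfolding Pplus_barrier_hess[OF assms(1-8)] barrier_dt_def barrier_def \<kappa>_def
    using a by (simp add: field_simps)
  moreover have "\<kappa> * barrier b t x \<le> \<bar>\<kappa>\<bar> * barrier b t x"
    using assms(12) by (intro mult_right_mono) auto
  moreover have "\<bar>\<kappa>\<bar> * barrier b t x \<le> barrier b t x powr (1 + p) + \<bar>\<kappa>\<bar> powr (1 + 1/p)"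
    using assms by (intro mult_le_powr_add_powr) auto
  moreover have "\<bar>\<kappa>\<bar> powr (1 + 1/p) \<le> q powr q / A * amp t"
    unfolding \<kappa>_def assms(10)[symmetric] using assms(6,7,9,10)
    by (intro amp_log_derivative_bound) (auto simp: add_pos_pos)
  moreover have "q powr q / A * amp t < C1 * amp t"
    using assms(7,11) a by (intro mult_strict_right_mono) (auto simp: field_simps)
  ultimately show ?thesis by (simp add: algebra_simps)
qed

lemma barrier_shift: "barrier b t x - \<beta> * amp t = barrier (b + \<beta>) t x"
  by (simp add: barrier_def profile_def algebra_simps)

lemma barrier_below_supersolution:
  fixes u :: "real \<Rightarrow> real^'n \<Rightarrow> real"
  assumes super: "visc_super k p u"
    and u_cont: "continuous_on ({0..} \<times> UNIV) (\<lambda>(t,x). u t x)"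
    and u_nonneg: "\<And>t x. 0 \<le> t \<Longrightarrow> 0 \<le> u t x"
    and prm: "card S = k" "1 \<le> k" "k < CARD('n)" "0 < t0" "0 < \<epsilon>" "0 < A"
      "t0 powr (- real k/2) / (4*t0) \<le> g" "0 < p" "q = 1 + 1/p" "q powr q < A * C1"
    and K: "compact K" "\<And>t x. t \<in> {0..T'} \<Longrightarrow> x \<notin> K \<Longrightarrow> barrier b t x \<le> 0"
    and initial: "\<And>x. barrier b 0 x < u 0 x" and final: "\<And>x. barrier b T' x < u T' x"
    and t: "t \<in> {0..T'}"
  shows "barrier b t x \<le> u t x"
proof (rule comparison_strict_subsolution[OF super u_cont u_nonneg _ _ _ K initial final _ t])
  show "continuous_on ({0..T'} \<times> UNIV) (\<lambda>(t,x). barrier b t x)"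
    using prm(4) by (auto intro: continuous_on_subset[OF continuous_on_barrier[OF prm(5)]])
  show "continuous_on {0..T'} amp"
    using continuous_on_amp[OF prm(5) continuous_on_id] by simp
  show "0 < amp t" for t using amp_pos prm by simp
  fix \<beta> t0' x0
  assume "0 \<le> \<beta>" "0 < t0'" "t0' < T'" "0 \<le> barrier b t0' x0 - \<beta> * amp t0'"
  then show "\<exists>\<phi>t D\<phi> H. C12_test (\<lambda>t x. barrier b t x - \<beta> * amp t) \<phi>t D\<phi> H \<and>
      \<phi>t t0' x0 < Pplus k (H t0' x0) + (barrier b t0' x0 - \<beta> * amp t0') powr (1 + p)"
    unfolding barrier_shift
    using C12_test_barrier[of "b + \<beta>"] barrier_strict_subsolution[OF prm(1-4) _ prm(5-10)] prm(4,5)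
    by (metis less_imp_le)
qed

lemma rho_nonneg: "0 \<le> rho x"
  by (simp add: rho_def)

lemma tau_nonneg: "0 \<le> tau x"
  by (simp add: tau_def)

lemma rho_add_tau: "rho x + tau x = (dist x c)^2"
proof -
  have "rho x + tau x = (\<Sum>i\<in>UNIV. (x - c)$i * (x - c)$i)"
    unfolding rho_def tau_def xS_def xN_def inner_vec_def coord_proj_def
    by (simp add: sum.distrib[symmetric]) (rule sum.cong, auto)
  also have "\<dots> = (x - c) \<bullet> (x - c)"
    by (simp add: inner_vec_def)
  finally show ?thesis
    by (simp add: dist_norm dot_square_norm)
qed

lemma heat_le_far:
  assumes "0 < t0" "0 \<le> t" "t \<le> T1" "0 < b"
    and far: "4*(t0+T1) * t0 powr (- real (card S)/2) / b \<le> rho x"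
  shows "heat t x \<le> b"
proof -
  define P0 where "P0 = t0 powr (- real (card S)/2)"
  define z where "z = rho x / (4*(t0+T1))"
  have "0 < 4*(t0+T1) * P0 / b" using assms by (simp add: P0_def)
  then have "0 < rho x" using far by (simp add: P0_def)
  then have z_pos: "0 < z" using assms by (simp add: z_def)
  have "heat t x \<le> P0 * exp (- rho x / (4*(t0+t)))"
    unfolding P0_def using heat_le assms by simp
  also have "\<dots> \<le> P0 * exp (- z)"
    using assms z_pos rho_nonneg[of x] by (auto simp: z_def P0_def intro!: divide_left_mono)
  also have "\<dots> \<le> P0 / z"
  proof -
    have "z \<le> exp z" using exp_ge_add_one_self[of z] by linarith
    then show ?thesis
      using mult_right_mono[of z "exp z" P0] z_pos by (simp add: exp_minus P0_def field_simps)
  qed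
  also have "\<dots> \<le> b"
    using far z_pos assms by (simp add: z_def P0_def field_simps)
  finally show ?thesis .
qed

lemma barrier_nonpos_far:
  assumes "0 < t0" "0 < b" "0 < g" "0 < A" "0 < \<epsilon>" "0 \<le> C1"
  obtains R where "\<And>t x. t \<in> {0..T1} \<Longrightarrow> x \<notin> cball c R \<Longrightarrow> barrier b t x \<le> 0"
proof
  define P0 where "P0 = t0 powr (- real (card S)/2)"
  define Y where "Y = 4*(t0+T1) * P0 / b"
  fix t x
  assume t: "t \<in> {0..T1}" and x: "x \<notin> cball c (sqrt (Y + P0 / g))"
  have R: "0 \<le> Y + P0 / g" using assms t by (simp add: Y_def P0_def)
  have "sqrt (Y + P0 / g) < dist x c" using x by (simp add: dist_commute)
  then have "(sqrt (Y + P0 / g))^2 < (dist x c)^2" using R by (intro power_strict_mono) auto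
  then have "Y + P0 / g < (dist x c)^2" using R by simp
  then have "Y \<le> rho x \<or> P0 / g < tau x"
    using rho_add_tau[of x] by linarith
  then have "Y \<le> rho x \<or> P0 < g * tau x"
    using assms(3) by (simp add: pos_divide_less_eq mult.commute)
  moreover have "heat t x \<le> P0" "0 \<le> C1 * t" "0 \<le> g * tau x"
    using heat_le_initial_peak assms t tau_nonneg[of x] by (auto simp: P0_def)
  moreover have "Y \<le> rho x \<Longrightarrow> heat t x \<le> b"
    using heat_le_far[of t T1 b x] assms t by (simp add: Y_def P0_def)
  ultimately have "profile b t x \<le> 0"
    using assms(2) unfolding profile_def by linarith
  then show "barrier b t x \<le> 0"
    using amp_pos[OF assms(4,5), of t] by (simp add: barrier_def mult_nonneg_nonpos)
qed

lemma profile_initial_neg_off_ball: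
  assumes "0 < t0" "0 < b" "0 < g" "0 \<le> r" "r \<le> dist x c"
    and g: "2 * t0 powr (- real (card S)/2) < g * r^2"
    and tail: "t0 powr (- real (card S)/2) * exp (- (r^2) / (8*t0)) < b"
  shows "profile b 0 x < 0"
proof -
  define P0 where "P0 = t0 powr (- real (card S)/2)"
  have heat0: "heat 0 x \<le> P0" "0 \<le> g * tau x"
    using heat_le_initial_peak[of 0 x] assms(1,3) tau_nonneg[of x] by (simp_all add: P0_def)
  have "r^2 \<le> rho x + tau x"
    using rho_add_tau[of x] assms(4,5) by (simp add: power_mono)
  then consider "r^2/2 \<le> rho x" | "r^2/2 \<le> tau x" by linarith
  then show ?thesis
  proof cases
    case 1
    then have exp_le: "exp (- rho x / (4*t0)) \<le> exp (- (r^2) / (8*t0))"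
      using assms(1) by (simp add: field_simps)
    have "heat 0 x \<le> P0 * exp (- rho x / (4*t0))"
      using heat_le[of 0 x] assms(1) by (simp add: P0_def)
    also have "\<dots> \<le> P0 * exp (- (r^2) / (8*t0))"
      using exp_le by (intro mult_left_mono) (simp_all add: P0_def)
    finally have "heat 0 x < b"
      using tail by (simp add: P0_def)
    then show ?thesis using heat0(2) by (simp add: profile_def)
  next
    case 2
    then have "g * (r^2/2) \<le> g * tau x" using assms(3) by (intro mult_left_mono) auto
    then show ?thesis using heat0(1) g assms(2) unfolding profile_def P0_def by linarith
  qed
qed

lemma barrier_initial_below:
  assumes "0 < t0" "0 < b" "0 < A" "0 < \<epsilon>" "0 < g" "0 < r"
    and amp0: "A * (T^2 + \<epsilon>^2) powr (-q/2) = \<delta> * t0 powr (real (card S)/2)"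
    and v: "\<And>x. dist x c < r \<Longrightarrow> \<delta> < v x" "\<And>x. 0 \<le> v x"
    and g: "2 * t0 powr (- real (card S)/2) < g * r^2"
    and tail: "t0 powr (- real (card S)/2) * exp (- (r^2) / (8*t0)) < b"
  shows "barrier b 0 x < v x"
proof (cases "dist x c < r")
  case True
  have "0 \<le> g * tau x" using assms(5) tau_nonneg[of x] by simp
  then have "profile b 0 x < t0 powr (- real (card S)/2)"
    using heat_le_initial_peak[of 0 x] assms(1,2) by (simp add: profile_def)
  then have "barrier b 0 x < amp 0 * t0 powr (- real (card S)/2)"
    using amp_pos[OF assms(3,4)] by (simp add: barrier_def)
  also have "\<dots> = \<delta>"
    using amp0 assms(1) by (simp add: amp_def zeta_def powr_add[symmetric])
  finally show ?thesis using v(1)[OF True] by simp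
next
  case False
  then have "barrier b 0 x < 0"
    using profile_initial_neg_off_ball[of b r x] amp_pos[OF assms(3,4), of 0] assms(1,2,5,6) g tail
    by (simp add: barrier_def mult_pos_neg)
  then show ?thesis using v(2)[of x] by simp
qed

lemma barrier_neg_late:
  assumes "0 < t0" "0 \<le> t" "0 < b" "0 < A" "0 < \<epsilon>" "0 \<le> g"
    and "t0 powr (- real (card S)/2) \<le> C1 * t"
  shows "barrier b t x < 0"
proof -
  have "0 \<le> g * tau x" using assms(6) tau_nonneg[of x] by simp
  then have "profile b t x < 0"
    using heat_le_initial_peak[OF assms(1,2), of x] assms(3,7) by (simp add: profile_def)
  then show ?thesis
    using amp_pos[OF assms(4,5), of t] by (simp add: barrier_def mult_pos_neg)
qed

lemma barrier_at_center:
  "barrier b T c = A * (\<epsilon>^2) powr (-q/2) * ((t0 + T) powr (- real (card S)/2) - b - C1 * T)"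
  by (simp add: barrier_def amp_def zeta_def profile_def heat_def rho_def tau_def xS_def xN_def)

lemma barrier_le_global_solution:
  assumes sol: "global_solution k p u0 u"
    and prm: "card S = k" "1 \<le> k" "k < CARD('n)" "0 < p" "q = 1 + 1/p"
    and u0: "0 < \<delta>" "0 < r" "\<And>x. dist x c < r \<Longrightarrow> \<delta> < u0 x"
    and pos: "0 < t0" "0 < \<epsilon>" "0 < A" "0 \<le> T" "0 < C1" "0 < b"
    and amp0: "A * (T^2 + \<epsilon>^2) powr (-q/2) = \<delta> * t0 powr (real k/2)"
    and AC1: "q powr q < A * C1"
    and g: "t0 powr (- real k/2) / (4*t0) \<le> g" "2 * t0 powr (- real k/2) < g * r^2"
    and tail: "t0 powr (- real k/2) * exp (- (r^2) / (8*t0)) < b"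
  shows "barrier b T c \<le> u T c"
proof -
  have u: "continuous_on ({0..} \<times> UNIV) (\<lambda>(t,x). u t x)" "\<And>t x. 0 \<le> t \<Longrightarrow> 0 \<le> u t x"
    "\<And>x. u 0 x = u0 x" "visc_super k p u"
    using sol by (auto simp: global_solution_def)
  have "0 < t0 powr (- real k/2) / (4*t0)" using pos(1) by simp
  then have "0 < g" using g(1) by linarith
  define T1 where "T1 = T + t0 powr (- real k/2) / C1"
  have T1: "T \<le> T1" "t0 powr (- real k/2) \<le> C1 * T1"
    using pos by (simp_all add: T1_def field_simps)
  obtain R where far: "\<And>t x. t \<in> {0..T1} \<Longrightarrow> x \<notin> cball c R \<Longrightarrow> barrier b t x \<le> 0"
    using barrier_nonpos_far[of b] pos \<open>0 < g\<close> by auto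
  have initial: "barrier b 0 x < u 0 x" for x
  proof -
    have "0 \<le> u0 y" for y using u(2)[of 0 y] u(3) by simp
    then show ?thesis
      using barrier_initial_below[where v = u0] prm(1) pos \<open>0 < g\<close> u0 amp0 g(2) tail u(3) by simp
  qed
  have final: "barrier b T1 x < u T1 x" for x
    using barrier_neg_late[of T1 b x] prm(1) pos T1 \<open>0 < g\<close> u(2)[of T1 x] by simp
  show ?thesis
    using pos g(1) T1(1) prm AC1
    by (intro barrier_below_supersolution[OF u(4) u(1,2), where K = "cball c R" and T' = T1]
        far initial final) auto
qed

end

section \<open>Choice of the parameters\<close>

lemma time_scales_exist:
  fixes k :: nat and p \<delta> r :: real
  assumes "1 \<le> k" "0 < p" "p < 2 / real k" "0 < \<delta>" "0 < r"
  obtains t0 T b C1 where "0 < t0" "0 < T" "0 < b" "0 < C1"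
    "t0 powr (- real k/2) * exp (- (r^2) / (8*t0)) < b"
    "b + C1 * T < (t0 + T) powr (- real k/2)"
    "\<delta> * t0 powr (real k/2) * T powr (1 + 1/p) * C1 = 2 * (1 + 1/p) powr (1 + 1/p)"
proof -
  \<comment> \<open>T = t0^(-\<gamma>) with \<gamma> (1/p - k/2) = k; the hypothesis p < 2/k is used only here. Then b is of
    order t0^(\<gamma> k/2), C1 T is smaller by a factor t0^(k/2), and the tail of the heat kernel at
    time 0 is exponentially small.\<close>
  define q where "q = 1 + 1/p"
  have k: "0 < real k" using assms(1) by simp
  have "real k / 2 < 1/p"
    using assms(2,3) k by (simp add: field_simps)
  then obtain \<gamma> where \<gamma>: "0 < \<gamma>" "\<gamma> / p = real k + \<gamma> * real k / 2"
    using assms(2) k by (intro that[of "real k / (1/p - real k/2)"]) (auto simp: field_simps)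
  define K where "K = 2 * q powr q / \<delta>"
  have "0 < q" using assms(2) by (simp add: q_def add_pos_pos)
  then have K: "0 < K" using assms(4) by (simp add: K_def)
  have "\<forall>\<^sub>F t in at_right 0. 0 < t \<and>
      t powr (- real k/2) * exp (- (r^2) / (8*t)) < (t + t powr (-\<gamma>)) powr (- real k/2) / 3 \<and>
      K * t powr (real k/2) * t powr (\<gamma> * real k/2) < (t + t powr (-\<gamma>)) powr (- real k/2) / 3"
    using k K \<gamma>(1) assms(5) by (intro eventually_conj) real_asymp+
  then obtain t where t: "0 < t"
    "t powr (- real k/2) * exp (- (r^2) / (8*t)) < (t + t powr (-\<gamma>)) powr (- real k/2) / 3"
    "K * t powr (real k/2) * t powr (\<gamma> * real k/2) < (t + t powr (-\<gamma>)) powr (- real k/2) / 3"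
    using eventually_happens'[OF trivial_limit_at_right_real] by blast
  define T where "T = t powr (-\<gamma>)"
  define C1 where "C1 = K * t powr (real k/2) * t powr (\<gamma> * real k/2) / T"
  have T: "0 < T" using t(1) by (simp add: T_def)
  show ?thesis
  proof (rule that[of t T "(t + T) powr (- real k/2) / 3" C1])
    show "0 < C1" using K t(1) T by (simp add: C1_def)
    have "C1 * T = K * t powr (real k/2) * t powr (\<gamma> * real k/2)"
      using T by (simp add: C1_def)
    moreover have "0 < (t + T) powr (- real k/2)"
      using t(1) T by simp
    ultimately show "(t + T) powr (- real k/2) / 3 + C1 * T < (t + T) powr (- real k/2)"
      using t(3)[folded T_def] by linarith
    have "T powr (1/p) = t powr (- (real k + \<gamma> * real k / 2))"
      using t(1) \<gamma>(2) by (simp add: T_def powr_powr)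
    then have Tq: "T powr q = T * t powr (- (real k + \<gamma> * real k / 2))"
      using T by (simp add: q_def powr_add)
    have "t powr (real k/2) * t powr (real k/2) * t powr (\<gamma> * real k/2) = t powr (real k + \<gamma> * real k / 2)"
      by (simp add: powr_add[symmetric])
    then have "t powr (- (real k + \<gamma> * real k / 2)) * (t powr (real k/2) * t powr (real k/2) * t powr (\<gamma> * real k/2)) = 1"
      using t(1) by (simp add: powr_add[symmetric])
    then have "T powr q * t powr (real k/2) * t powr (real k/2) * t powr (\<gamma> * real k/2) = T"
      unfolding Tq by (simp add: mult_ac)
    then show "\<delta> * t powr (real k/2) * T powr (1 + 1/p) * C1 = 2 * (1 + 1/p) powr (1 + 1/p)"
      using assms(4) T by (simp add: C1_def K_def q_def[symmetric] field_simps)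
  qed (use t(1) t(2)[folded T_def] T in auto)
qed

lemma blowup_parameters_exist:
  fixes k :: nat and p \<delta> r :: real and U :: "real \<Rightarrow> real"
  assumes "1 \<le> k" "0 < p" "p < 2 / real k" "0 < \<delta>" "0 < r"
  defines "q \<equiv> 1 + 1/p"
  obtains t0 T b C1 \<epsilon> A where "0 < t0" "0 \<le> T" "0 < b" "0 < C1" "0 < \<epsilon>" "0 < A"
    "A * (T^2 + \<epsilon>^2) powr (-q/2) = \<delta> * t0 powr (real k/2)"
    "q powr q < A * C1"
    "t0 powr (- real k/2) * exp (- (r^2) / (8*t0)) < b"
    "U T < A * (\<epsilon>^2) powr (-q/2) * ((t0 + T) powr (- real k/2) - b - C1 * T)"
proof -
  obtain t0 T b C1 where pos: "0 < t0" "0 < T" "0 < b" "0 < C1"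
    and tail: "t0 powr (- real k/2) * exp (- (r^2) / (8*t0)) < b"
    and gap: "b + C1 * T < (t0 + T) powr (- real k/2)"
    and C1: "\<delta> * t0 powr (real k/2) * T powr q * C1 = 2 * q powr q"
    using time_scales_exist[OF assms(1-5)] unfolding q_def by blast
  \<comment> \<open>\<epsilon> is chosen last, once U T is known: a(T) = A \<epsilon>^(-q) blows up as \<epsilon> tends to 0 while
    a(0) = \<delta> t0^(k/2) stays fixed.\<close>
  have q: "0 < q" using assms(2) by (simp add: q_def add_pos_pos)
  define F where "F = (t0 + T) powr (- real k/2) - b - C1 * T"
  define A\<^sub>0 where "A\<^sub>0 = \<delta> * t0 powr (real k/2) * T powr q"
  have "0 < A\<^sub>0 * F" using gap pos assms(4) by (simp add: F_def A\<^sub>0_def)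
  then have "filterlim (\<lambda>\<epsilon>. A\<^sub>0 * F * (\<epsilon>^2) powr (-q/2)) at_top (at_right 0)"
    using q by real_asymp
  then have "\<forall>\<^sub>F \<epsilon> in at_right 0. 0 < \<epsilon> \<and> U T < A\<^sub>0 * F * (\<epsilon>^2) powr (-q/2)"
    by (intro eventually_conj eventually_at_right_less) (simp add: filterlim_at_top_dense)
  then obtain \<epsilon> where \<epsilon>: "0 < \<epsilon>" "U T < A\<^sub>0 * F * (\<epsilon>^2) powr (-q/2)"
    using eventually_happens'[OF trivial_limit_at_right_real] by blast
  define A where "A = \<delta> * t0 powr (real k/2) * (T^2 + \<epsilon>^2) powr (q/2)"
  have "T powr q = (T powr 2) powr (q/2)"
    by (simp add: powr_powr)
  also have "\<dots> = (T^2) powr (q/2)"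
    using pos(2) by (simp add: powr_numeral)
  also have "\<dots> \<le> (T^2 + \<epsilon>^2) powr (q/2)"
    using q by (intro powr_mono2) auto
  finally have A0_le: "A\<^sub>0 \<le> A"
    using pos(1) assms(4) by (simp add: A\<^sub>0_def A_def)
  show ?thesis
  proof (rule that[of t0 T b C1 \<epsilon> A])
    show "0 < A" using pos(1) assms(4) \<epsilon>(1) by (simp add: A_def)
    show "A * (T^2 + \<epsilon>^2) powr (-q/2) = \<delta> * t0 powr (real k/2)"
      using \<epsilon>(1) by (simp add: A_def powr_minus)
    have "2 * q powr q \<le> A * C1"
      using mult_right_mono[OF A0_le, of C1] pos(4) C1 by (simp add: A\<^sub>0_def)
    moreover have "0 < q powr q" using q by simp
    ultimately show "q powr q < A * C1" by linarith
    have "0 < F" using gap by (simp add: F_def)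
    then have "A\<^sub>0 * (F * (\<epsilon>^2) powr (-q/2)) \<le> A * (F * (\<epsilon>^2) powr (-q/2))"
      using A0_le by (intro mult_right_mono) auto
    then have "A\<^sub>0 * F * (\<epsilon>^2) powr (-q/2) \<le> A * (\<epsilon>^2) powr (-q/2) * F"
      by (simp add: mult_ac)
    then show "U T < A * (\<epsilon>^2) powr (-q/2) * ((t0 + T) powr (- real k/2) - b - C1 * T)"
      using \<epsilon>(2) by (simp add: F_def)
  qed (use pos tail \<epsilon>(1) in auto)
qed

lemma no_global_solution_if_above_on_ball:
  fixes u0 :: "real^'n \<Rightarrow> real"
  assumes "1 \<le> k" "k < CARD('n)" "0 < p" "p < 2 / real k"
    and "0 < \<delta>" "0 < r" "\<And>x. dist x c < r \<Longrightarrow> \<delta> < u0 x"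
  shows "\<not> global_solution k p u0 u"
proof
  assume sol: "global_solution k p u0 u"
  obtain S :: "'n set" where S: "card S = k"
    using obtain_subset_with_card_n[of k "UNIV :: 'n set"] assms(2) by auto
  obtain t0 T b C1 \<epsilon> A where prm: "0 < t0" "0 \<le> T" "0 < b" "0 < C1" "0 < \<epsilon>" "0 < A"
    "A * (T^2 + \<epsilon>^2) powr (-(1 + 1/p)/2) = \<delta> * t0 powr (real k/2)"
    "(1 + 1/p) powr (1 + 1/p) < A * C1"
    "t0 powr (- real k/2) * exp (- (r^2) / (8*t0)) < b"
    and big: "u T c < A * (\<epsilon>^2) powr (-(1 + 1/p)/2) * ((t0 + T) powr (- real k/2) - b - C1 * T)"
    by (rule blowup_parameters_exist[OF assms(1,3,4,5,6), of "\<lambda>T. u T c"])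
  define P0 where "P0 = t0 powr (- real k/2)"
  define g where "g = P0 / (4*t0) + 2 * P0 / r^2 + 1"
  have "0 < P0" "0 < P0 / (4*t0) * r^2" "0 < r^2"
    using prm(1) assms(6) by (simp_all add: P0_def)
  then have g: "P0 / (4*t0) \<le> g" "2 * P0 < g * r^2"
    by (simp_all add: g_def distrib_right add_pos_pos)
  have "barrier S c t0 A T \<epsilon> (1 + 1/p) C1 g b T c \<le> u T c"
    using g[unfolded P0_def]
    by (intro barrier_le_global_solution[OF sol S assms(1-3) refl assms(5-7) prm(1,5,6,2,4,3,7,8)] prm(9))
  with big S show False
    by (simp add: barrier_at_center)
qed

theorem mainTheorem6:
  fixes u0 :: "real^'n \<Rightarrow> real" and k :: nat and p :: real
  assumes "CARD('n) \<ge> 2" and "1 \<le> k" and "k < CARD('n)"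
    and "0 < p" and "p < 2 / real k"
    and "uniformly_continuous_on UNIV u0"
    and "\<forall>x. u0 x \<ge> 0" and "\<exists>x. u0 x \<noteq> 0"
  shows "\<not> (\<exists>u. global_solution k p u0 u)"
proof -
  obtain c where c: "0 < u0 c" using assms(7,8) by (metis less_eq_real_def)
  have "isCont u0 c"
    using uniformly_continuous_imp_continuous[OF assms(6)] by (simp add: continuous_on_eq_continuous_at)
  then have "\<forall>\<^sub>F x in nhds c. u0 c / 2 < u0 x"
    using c unfolding isCont_def tendsto_at_iff_tendsto_nhds by (intro order_tendstoD(1)) auto
  then obtain r where r: "0 < r" "\<And>x. dist x c < r \<Longrightarrow> u0 c / 2 < u0 x"
    by (auto simp: eventually_nhds_metric dist_commute)
  have "0 < u0 c / 2" using c by simp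
  then show ?thesis
    using no_global_solution_if_above_on_ball[OF assms(2-5), where \<delta> = "u0 c / 2" and c = c] r by blast
qed

end
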